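(* Let $n$ and $0<n_1<\cdots<n_d<n$ be integers with $m_1=n_1$, $m_k=n_k-n_{k-1}$ ($2\le k\le d$), $m_{d+1}=n-n_d$, and equip $\mathrm{Flag}(n_1,\dots,n_d;n)=\{(VJ_1V^{\mathsf T},\dots,VJ_{d+1}V^{\mathsf T}):V\in\mathrm{O}(n)\}\subseteq(\mathbb{R}^{n\times n})^{d+1}$ with the Riemannian metric induced by the Frobenius inner product. Let $V(t)$ be a differentiable curve in $\mathrm{O}(n)$, $c(t)=V(t)(J_1,\dots,J_{d+1})V(t)^{\mathsf T}$, and let $\Lambda(t)\in\mathfrak{so}(n)$ be such that $\dot V(t)=V(t)\Lambda(t)$, with $\Lambda(k,k)(t)\equiv0$ for $k=1,\dots,d+1$. Then $c(t)$ is a geodesic if and only if $V(t)=V(0)\exp(t\Lambda(0))$.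
   Context: $J_k=\operatorname{diag}(-I_{m_1},\dots,-I_{m_{k-1}},I_{m_k},-I_{m_{k+1}},\dots,-I_{m_{d+1}})$ for $k=1,\dots,d+1$. $V(X_1,\dots,X_{d+1})V^{\mathsf T}$ denotes $(VX_1V^{\mathsf T},\dots,VX_{d+1}V^{\mathsf T})$. For an $n\times n$ matrix $M$, $M(p,q)$ denotes its $(p,q)$ block in the partition $n=m_1+\cdots+m_{d+1}$. A curve $c$ is a geodesic iff the orthogonal projection of $\ddot c(t)$ onto $\mathbb{T}_{c(t)}\mathrm{Flag}$ vanishes for all $t$. *)

theory Defs
  imports "HOL-Analysis.Analysis"
begin

text \<open>A fixed enumeration of a finite index type by 0,...,CARD-1 (used to order the
  rows/columns of n x n matrices, and the d+1 factors of the product).\<close>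
definition enum_pos :: "'a::finite \<Rightarrow> nat" where
  "enum_pos = (SOME f. bij_betw f (UNIV::'a set) {0..<CARD('a)})"

definition bnd :: "(nat \<Rightarrow> nat) \<Rightarrow> nat \<Rightarrow> nat \<Rightarrow> nat \<Rightarrow> nat" where
  "bnd ns d n k = (if k = 0 then 0 else if k = d + 1 then n else ns k)"

definition inblk :: "(nat \<Rightarrow> nat) \<Rightarrow> nat \<Rightarrow> nat \<Rightarrow> 'n::finite \<Rightarrow> bool" where
  "inblk ns d k i \<longleftrightarrow> 1 \<le> k \<and> k \<le> d + 1 \<and>
     bnd ns d CARD('n) (k - 1) \<le> enum_pos i \<and> enum_pos i < bnd ns d CARD('n) k"

text \<open>J_k = diag(-I,...,-I,I_{m_k},-I,...,-I); the factor index kappa :: 'k corresponds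
  to k = enum_pos kappa + 1, and d + 1 = CARD('k).\<close>
definition Jm :: "(nat \<Rightarrow> nat) \<Rightarrow> 'k::finite \<Rightarrow> real^'n::finite^'n" where
  "Jm ns \<kappa> = (\<chi> i j. if i = j then
      (if inblk ns (CARD('k) - 1) (enum_pos \<kappa> + 1) i then 1 else -1) else 0)"

text \<open>The flag manifold Flag(n_1,...,n_d;n) inside (R^{n x n})^{d+1}; the Euclidean
  structure of (real^'n^'n)^'k is exactly the (sum of) Frobenius inner product(s).\<close>
definition flag :: "(nat \<Rightarrow> nat) \<Rightarrow> ((real^'n::finite^'n)^'k::finite) set" where
  "flag ns = {(\<chi> \<kappa>. V ** Jm ns \<kappa> ** transpose V) | V. orthogonal_matrix V}"

definition tangent_space :: "'a::real_normed_vector set \<Rightarrow> 'a \<Rightarrow> 'a set" where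
  "tangent_space S x = {v. \<exists>\<gamma> :: real \<Rightarrow> 'a. (\<forall>t. \<gamma> t \<in> S) \<and> \<gamma> 0 = x \<and>
       (\<gamma> has_vector_derivative v) (at 0)}"

definition orth_proj :: "'a::real_inner set \<Rightarrow> 'a \<Rightarrow> 'a" where
  "orth_proj T x = (THE p. p \<in> T \<and> (\<forall>y\<in>T. inner (x - p) y = 0))"

definition geodesic :: "'a::real_inner set \<Rightarrow> (real \<Rightarrow> 'a) \<Rightarrow> bool" where
  "geodesic S c \<longleftrightarrow> (\<forall>t. c t \<in> S) \<and>
     (\<exists>c' c''. \<forall>t. (c has_vector_derivative c' t) (at t) \<and>
        (c' has_vector_derivative c'' t) (at t) \<and>
        orth_proj (tangent_space S (c t)) (c'' t) = 0)"

primrec matpow :: "real^'n::finite^'n \<Rightarrow> nat \<Rightarrow> real^'n^'n" where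
  "matpow A 0 = mat 1"
| "matpow A (Suc k) = A ** matpow A k"

definition mexp :: "real^'n::finite^'n \<Rightarrow> real^'n^'n" where
  "mexp A = (\<Sum>k. (1 / fact k) *\<^sub>R matpow A k)"

end

theory Submission
  imports Defs
begin

text \<open>
  Write \<open>J = (J\<^sub>1, ..., J\<^sub>d\<^sub>+\<^sub>1)\<close> and \<open>c = V J V\<^sup>T\<close>. From \<open>V' = V \<Lambda>\<close> one gets
  \<open>c' = V [\<Lambda>, J] V\<^sup>T\<close> and, once \<open>\<Lambda>\<close> is known to be differentiable,
  \<open>c'' = V [\<Lambda>, [\<Lambda>, J]] V\<^sup>T + V [\<Lambda>', J] V\<^sup>T\<close>. The second term is tangent to the flag
  manifold because \<open>\<Lambda>'\<close> is again skew. The first one is normal when \<open>\<Lambda>\<close> is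
  block-off-diagonal: pulled back to \<open>J\<close>, a tangent vector \<open>u\<close> satisfies the linearisations
  \<open>u\<^sub>k J\<^sub>k + J\<^sub>k u\<^sub>k = 0\<close> and \<open>u\<^sub>k J\<^sub>l + J\<^sub>k u\<^sub>l + u\<^sub>k + u\<^sub>l = 0\<close> of the relations
  \<open>J\<^sub>k\<^sup>2 = 1\<close> and \<open>J\<^sub>k J\<^sub>l = -1 - J\<^sub>k - J\<^sub>l\<close> (\<open>k \<noteq> l\<close>), and an entrywise computation
  gives \<open>\<Sum>\<^sub>k \<langle>[\<Lambda>, [\<Lambda>, J\<^sub>k]], u\<^sub>k\<rangle> = 0\<close>. So \<open>c\<close> is a geodesic iff
  \<open>[\<Lambda>', J\<^sub>k] = 0\<close> for all \<open>k\<close>, i.e. iff \<open>\<Lambda>' = 0\<close>, since a block-off-diagonal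
  matrix is a linear function of its commutators with the \<open>J\<^sub>k\<close>. The same fact shows that
  \<open>\<Lambda>\<close>, a linear function of \<open>V\<^sup>T c' V\<close>, is differentiable along a geodesic. Finally,
  \<open>\<Lambda>\<close> is constant iff \<open>V(t) = V(0) exp(t \<Lambda>(0))\<close>.
\<close>

section \<open>Calculus of real square matrices\<close>

lemma matrix_add_rdistrib: "(A + B) ** C = A ** C + B ** (C :: real^'p::finite^'n::finite)"
  by (simp add: matrix_matrix_mult_def vec_eq_iff sum.distrib[symmetric] algebra_simps)

lemma bounded_bilinear_matrix_matrix_mult:
  "bounded_bilinear ((**) :: real^'n::finite^'m::finite \<Rightarrow> real^'p::finite^'n \<Rightarrow> real^'p^'m)"
proof -
  have "bilinear ((**) :: real^'n^'m \<Rightarrow> real^'p^'n \<Rightarrow> real^'p^'m)"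
    unfolding bilinear_def
    by (auto intro!: linearI simp: matrix_add_ldistrib matrix_add_rdistrib
        matrix_scalar_ac scalar_matrix_assoc)
  then show ?thesis
    by (simp add: bilinear_conv_bounded_bilinear)
qed

lemmas matrix_mult_diff_left = bounded_bilinear.diff_left[OF bounded_bilinear_matrix_matrix_mult]
lemmas matrix_mult_diff_right = bounded_bilinear.diff_right[OF bounded_bilinear_matrix_matrix_mult]
lemmas matrix_mult_minus_left = bounded_bilinear.minus_left[OF bounded_bilinear_matrix_matrix_mult]
lemmas matrix_mult_minus_right = bounded_bilinear.minus_right[OF bounded_bilinear_matrix_matrix_mult]
lemmas has_vector_derivative_matrix_mult =
  bounded_bilinear.has_vector_derivative[OF bounded_bilinear_matrix_matrix_mult]

lemma bounded_linear_transpose: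
  "bounded_linear (transpose :: real^'n::finite^'m::finite \<Rightarrow> real^'m^'n)"
  by (simp add: linear_conv_bounded_linear[symmetric] linearI transpose_def vec_eq_iff)

lemmas has_vector_derivative_transpose =
  bounded_linear.has_vector_derivative[OF bounded_linear_transpose]

lemma has_vector_derivative_vec_lambda:
  fixes f :: "'k::finite \<Rightarrow> real \<Rightarrow> 'a::euclidean_space"
  assumes "\<And>\<kappa>. (f \<kappa> has_vector_derivative f' \<kappa>) (at t)"
  shows "((\<lambda>s. \<chi> \<kappa>. f \<kappa> s) has_vector_derivative (\<chi> \<kappa>. f' \<kappa>)) (at t)"
proof -
  have axis: "bounded_linear (axis \<kappa> :: 'a \<Rightarrow> 'a^'k)" for \<kappa>
    by (simp add: linear_conv_bounded_linear[symmetric] linearI axis_def vec_eq_iff)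
  have sum_axis: "(\<chi> \<kappa>. g \<kappa>) = (\<Sum>\<kappa>\<in>UNIV. axis \<kappa> (g \<kappa>))" for g :: "'k \<Rightarrow> 'a"
    by (simp add: vec_eq_iff axis_def sum_component if_distrib cong: if_cong)
  show ?thesis
    unfolding sum_axis
    by (intro has_vector_derivative_sum bounded_linear.has_vector_derivative[OF axis] assms)
qed

lemmas has_vector_derivative_vec_nth = bounded_linear.has_vector_derivative[OF bounded_linear_vec_nth]

lemma has_vector_derivative_zero_imp_const:
  fixes f :: "real \<Rightarrow> 'a::real_normed_vector"
  assumes "\<And>t. (f has_vector_derivative 0) (at t)"
  shows "f t = f 0"
  using has_vector_derivative_zero_constant[of UNIV f] assms by (metis convex_UNIV UNIV_I)

lemma inner_matrix_mult_right:
  "inner ((A :: real^'n::finite^'m::finite) ** (B :: real^'p::finite^'n)) C = inner A (C ** transpose B)"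
proof -
  have "inner (A ** B) C = (\<Sum>i\<in>UNIV. \<Sum>j\<in>UNIV. \<Sum>k\<in>UNIV. A$i$k * B$k$j * C$i$j)"
    by (simp add: inner_vec_def matrix_matrix_mult_def sum_distrib_right)
  also have "\<dots> = (\<Sum>i\<in>UNIV. \<Sum>k\<in>UNIV. \<Sum>j\<in>UNIV. A$i$k * B$k$j * C$i$j)"
    by (rule sum.cong[OF refl], rule sum.swap)
  also have "\<dots> = inner A (C ** transpose B)"
    by (simp add: inner_vec_def matrix_matrix_mult_def transpose_def sum_distrib_left mult_ac)
  finally show ?thesis .
qed

lemma inner_transpose: "inner (transpose A) (transpose B) = inner (A :: real^'n::finite^'m::finite) B"
  unfolding inner_vec_def transpose_def by (simp add: sum.swap[of _ "UNIV :: 'n set"])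

lemma inner_matrix_mult_left:
  "inner ((A :: real^'n::finite^'m::finite) ** (B :: real^'p::finite^'n)) C = inner B (transpose A ** C)"
proof -
  have "inner (A ** B) C = inner (transpose B ** transpose A) (transpose C)"
    by (metis inner_transpose matrix_transpose_mul)
  also have "\<dots> = inner B (transpose A ** C)"
    by (metis inner_transpose inner_matrix_mult_right matrix_transpose_mul transpose_transpose)
  finally show ?thesis .
qed

section \<open>The matrix exponential\<close>

lemma onorm_matrix_eq_0: "onorm ((*v) A) = 0 \<longleftrightarrow> A = (0 :: real^'n::finite^'m::finite)"
  by (simp add: onorm_eq_0 matrix_eq)

lemma onorm_matrix_add:
  "onorm ((*v) (A + B)) \<le> onorm ((*v) A) + onorm ((*v) (B :: real^'n::finite^'m::finite))"
proof -
  have "(*v) (A + B) = (\<lambda>x. A *v x + B *v x)"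
    by (rule ext) (simp add: matrix_vector_mult_add_rdistrib)
  then show ?thesis
    using onorm_triangle[OF matrix_vector_mul_bounded_linear matrix_vector_mul_bounded_linear]
    by simp
qed

lemma onorm_matrix_scaleR:
  "onorm ((*v) (r *\<^sub>R A)) = \<bar>r\<bar> * onorm ((*v) (A :: real^'n::finite^'m::finite))"
  using onorm_scaleR[OF matrix_vector_mul_bounded_linear[of A], of r]
  by (simp add: scaleR_matrix_vector_assoc)

lemma onorm_matrix_mult:
  "onorm ((*v) (A ** B)) \<le> onorm ((*v) A) * onorm ((*v) (B :: real^'p::finite^'n::finite))"
  for A :: "real^'n^'m::finite"
  using onorm_compose[OF matrix_vector_mul_bounded_linear[of A] matrix_vector_mul_bounded_linear[of B]]
  by (simp add: o_def matrix_vector_mul_assoc)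

lemma onorm_mat_1: "onorm ((*v) (mat 1 :: real^'n::finite^'n)) = 1"
  using onorm_id by (metis eq_id_iff matrix_vector_mul_lid)

typedef 'n sqmatrix = "UNIV :: (real^'n::finite^'n) set"
  morphisms to_matrix of_matrix by simp

setup_lifting type_definition_sqmatrix

text \<open>\<^const>\<open>mexp\<close> is transported from \<^const>\<open>exp\<close> on the Banach algebra
  \<^typ>\<open>'n sqmatrix\<close>, a copy of \<^typ>\<open>real^'n^'n\<close> normed by the operator norm (the
  Frobenius norm of \<^typ>\<open>real^'n^'n\<close> violates \<open>norm 1 = 1\<close>).\<close>

instantiation sqmatrix :: (finite) real_normed_algebra_1
begin
lift_definition norm_sqmatrix :: "'a sqmatrix \<Rightarrow> real" is "\<lambda>A. onorm ((*v) A)" .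
lift_definition plus_sqmatrix :: "'a sqmatrix \<Rightarrow> 'a sqmatrix \<Rightarrow> 'a sqmatrix" is "(+)" .
lift_definition minus_sqmatrix :: "'a sqmatrix \<Rightarrow> 'a sqmatrix \<Rightarrow> 'a sqmatrix" is "(-)" .
lift_definition uminus_sqmatrix :: "'a sqmatrix \<Rightarrow> 'a sqmatrix" is "uminus" .
lift_definition zero_sqmatrix :: "'a sqmatrix" is "0" .
lift_definition one_sqmatrix :: "'a sqmatrix" is "mat 1" .
lift_definition times_sqmatrix :: "'a sqmatrix \<Rightarrow> 'a sqmatrix \<Rightarrow> 'a sqmatrix" is "(**)" .
lift_definition scaleR_sqmatrix :: "real \<Rightarrow> 'a sqmatrix \<Rightarrow> 'a sqmatrix" is "scaleR" .
definition dist_sqmatrix :: "'a sqmatrix \<Rightarrow> 'a sqmatrix \<Rightarrow> real" where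
  "dist_sqmatrix a b = norm (a - b)"
definition uniformity_sqmatrix :: "('a sqmatrix \<times> 'a sqmatrix) filter" where
  "uniformity_sqmatrix = (INF e\<in>{0 <..}. principal {(x, y). dist x y < e})"
definition open_sqmatrix :: "'a sqmatrix set \<Rightarrow> bool" where
  "open_sqmatrix S = (\<forall>x\<in>S. \<forall>\<^sub>F (x', y) in uniformity. x' = x \<longrightarrow> y \<in> S)"
definition sgn_sqmatrix :: "'a sqmatrix \<Rightarrow> 'a sqmatrix" where
  "sgn_sqmatrix x = scaleR (inverse (norm x)) x"
instance
proof
  fix a b c :: "'a sqmatrix" and r s :: real
  show "a + b + c = a + (b + c)" by transfer (rule add.assoc)
  show "a + b = b + a" by transfer (rule add.commute)
  show "0 + a = a" by transfer simp
  show "- a + a = 0" by transfer simp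
  show "a - b = a + - b" by transfer simp
  show "r *\<^sub>R (a + b) = r *\<^sub>R a + r *\<^sub>R b" by transfer (rule scaleR_add_right)
  show "(r + s) *\<^sub>R a = r *\<^sub>R a + s *\<^sub>R a" by transfer (rule scaleR_add_left)
  show "r *\<^sub>R s *\<^sub>R a = (r * s) *\<^sub>R a" by transfer simp
  show "1 *\<^sub>R a = a" by transfer simp
  show "a * b * c = a * (b * c)" by transfer (simp add: matrix_mul_assoc)
  show "1 * a = a" by transfer simp
  show "a * 1 = a" by transfer simp
  show "(a + b) * c = a * c + b * c" by transfer (rule matrix_add_rdistrib)
  show "a * (b + c) = a * b + a * c" by transfer (rule matrix_add_ldistrib)
  show "r *\<^sub>R a * b = r *\<^sub>R (a * b)" by transfer (simp add: scalar_matrix_assoc)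
  show "a * r *\<^sub>R b = r *\<^sub>R (a * b)" by transfer (simp add: matrix_scalar_ac scalar_matrix_assoc)
  show "(0::'a sqmatrix) \<noteq> 1"
    by transfer (simp add: vec_eq_iff mat_def)
  show "dist a b = norm (a - b)" "sgn a = inverse (norm a) *\<^sub>R a"
    by (simp_all add: dist_sqmatrix_def sgn_sqmatrix_def)
  show "(uniformity :: ('a sqmatrix \<times> 'a sqmatrix) filter) =
      (INF e\<in>{0 <..}. principal {(x, y). dist x y < e})"
    by (simp add: uniformity_sqmatrix_def)
  show "open U = (\<forall>x\<in>U. \<forall>\<^sub>F (x', y) in uniformity. x' = x \<longrightarrow> y \<in> U)" for U :: "'a sqmatrix set"
    by (simp add: open_sqmatrix_def)
  show "(norm a = 0) = (a = 0)" by transfer (rule onorm_matrix_eq_0)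
  show "norm (a + b) \<le> norm a + norm b" by transfer (rule onorm_matrix_add)
  show "norm (r *\<^sub>R a) = \<bar>r\<bar> * norm a" by transfer (rule onorm_matrix_scaleR)
  show "norm (a * b) \<le> norm a * norm b" by transfer (rule onorm_matrix_mult)
  show "norm (1::'a sqmatrix) = 1" by transfer (rule onorm_mat_1)
qed
end

lemma to_matrix_simps:
  "to_matrix (a + b) = to_matrix a + to_matrix b"
  "to_matrix (r *\<^sub>R a) = r *\<^sub>R to_matrix a"
  "to_matrix (a * b) = to_matrix a ** to_matrix b"
  "to_matrix 1 = mat 1"
  by (transfer; simp)+

lemma norm_to_matrix_le:
  "norm (to_matrix (x :: 'n::finite sqmatrix)) \<le> norm x * (real CARD('n) * real CARD('n))"
proof (transfer)
  fix A :: "real^'n^'n"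
  have "norm A \<le> (\<Sum>i\<in>UNIV. norm (A$i))"
    unfolding norm_vec_def by (rule L2_set_le_sum) simp
  also have "\<dots> \<le> (\<Sum>i\<in>UNIV. \<Sum>j\<in>UNIV. \<bar>A$i$j\<bar>)"
    by (rule sum_mono) (rule norm_le_l1_cart)
  also have "\<dots> \<le> (\<Sum>i\<in>(UNIV::'n set). \<Sum>j\<in>(UNIV::'n set). onorm ((*v) A))"
    by (intro sum_mono matrix_component_le_onorm)
  finally show "norm A \<le> onorm ((*v) A) * (real CARD('n) * real CARD('n))"
    by (simp add: mult_ac)
qed

lemma bounded_linear_to_matrix: "bounded_linear (to_matrix :: 'n::finite sqmatrix \<Rightarrow> _)"
  by (rule bounded_linear_intro[OF _ _ norm_to_matrix_le]) (simp_all add: to_matrix_simps)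

lemma bounded_linear_of_matrix: "bounded_linear (of_matrix :: real^'n::finite^'n \<Rightarrow> _)"
  by (simp add: linear_conv_bounded_linear[symmetric] linearI plus_sqmatrix.abs_eq
      scaleR_sqmatrix.abs_eq)

instance sqmatrix :: (finite) banach
proof
  fix X :: "nat \<Rightarrow> 'a sqmatrix"
  assume "Cauchy X"
  then have "Cauchy (\<lambda>k. to_matrix (X k))"
    by (rule bounded_linear.Cauchy[OF bounded_linear_to_matrix])
  then obtain L where "(\<lambda>k. to_matrix (X k)) \<longlonglongrightarrow> L"
    by (auto simp: Cauchy_convergent_iff convergent_def)
  then have "(\<lambda>k. of_matrix (to_matrix (X k))) \<longlonglongrightarrow> of_matrix L"
    by (rule bounded_linear.tendsto[OF bounded_linear_of_matrix])
  then have "X \<longlonglongrightarrow> of_matrix L"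
    by (simp add: to_matrix_inverse)
  then show "convergent X"
    by (auto simp: convergent_def)
qed

lemma to_matrix_power: "to_matrix (of_matrix A ^ k) = matpow A k"
  by (induction k) (simp_all add: to_matrix_simps of_matrix_inverse)

lemma mexp_series_eq:
  "(\<lambda>k. (1 / fact k) *\<^sub>R matpow A k) = (\<lambda>k. to_matrix (of_matrix A ^ k /\<^sub>R fact k))"
  by (simp add: to_matrix_simps to_matrix_power divide_inverse)

lemma summable_mexp: "summable (\<lambda>k. (1 / fact k) *\<^sub>R matpow A k)"
  unfolding mexp_series_eq
  by (rule bounded_linear.summable[OF bounded_linear_to_matrix summable_exp_generic])

lemma mexp_eq_exp: "mexp A = to_matrix (exp (of_matrix A))"
  unfolding mexp_def exp_def mexp_series_eq
  by (rule bounded_linear.suminf[OF bounded_linear_to_matrix summable_exp_generic, symmetric])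

lemma of_matrix_scaleR: "of_matrix (r *\<^sub>R A) = r *\<^sub>R of_matrix A"
  by (simp add: scaleR_sqmatrix.abs_eq)

lemma has_vector_derivative_mexp:
  "((\<lambda>s. mexp (s *\<^sub>R A)) has_vector_derivative mexp (t *\<^sub>R A) ** A) (at t)"
proof -
  have "((\<lambda>s. to_matrix (exp (s *\<^sub>R of_matrix A))) has_vector_derivative
      to_matrix (exp (t *\<^sub>R of_matrix A) * of_matrix A)) (at t)"
    by (rule bounded_linear.has_vector_derivative[OF bounded_linear_to_matrix
          exp_scaleR_has_vector_derivative_right])
  then show ?thesis
    by (simp add: mexp_eq_exp of_matrix_scaleR to_matrix_simps of_matrix_inverse)
qed

lemma mexp_zero: "mexp 0 = mat 1"
  by (simp add: mexp_eq_exp zero_sqmatrix.abs_eq[symmetric] to_matrix_simps)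

lemma of_matrix_uminus: "of_matrix (- A) = - of_matrix A"
  by (simp add: uminus_sqmatrix.abs_eq)

lemma mexp_scaleR_commute: "mexp (s *\<^sub>R A) ** A = A ** mexp (s *\<^sub>R A)"
proof -
  have "to_matrix (exp (s *\<^sub>R of_matrix A) * of_matrix A) =
      to_matrix (of_matrix A * exp (s *\<^sub>R of_matrix A))"
    by (simp only: exp_times_scaleR_commute)
  then show ?thesis
    by (simp add: mexp_eq_exp of_matrix_scaleR to_matrix_simps of_matrix_inverse)
qed

lemma mexp_minus_mult: "mexp (- A) ** mexp A = mat 1"
proof -
  have "to_matrix (exp (- of_matrix A) * exp (of_matrix A)) = mat 1"
    using exp_minus_inverse[of "- of_matrix A"] by (simp add: to_matrix_simps)
  then show ?thesis
    by (simp add: mexp_eq_exp of_matrix_uminus to_matrix_simps)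
qed

lemma matpow_commute: "matpow A k ** A = A ** matpow A k"
  by (induction k) (simp_all add: matrix_mul_assoc[symmetric])

lemma transpose_matpow: "transpose (matpow A k) = matpow (transpose A) k"
  by (induction k) (simp_all add: matrix_transpose_mul matpow_commute)

lemma transpose_mexp: "transpose (mexp A) = mexp (transpose A)"
  unfolding mexp_def
  by (simp add: bounded_linear.suminf[OF bounded_linear_transpose summable_mexp]
      transpose_scalar transpose_matpow)

lemma orthogonal_matrix_mexp:
  assumes "transpose A = - A"
  shows "orthogonal_matrix (mexp A)"
  using mexp_minus_mult[of A] mexp_minus_mult[of "- A"]
  by (simp add: orthogonal_matrix_def transpose_mexp assms)

lemma eq_mexp_iff_generator_const:
  assumes orth: "\<And>t. orthogonal_matrix (V t)"
    and dV: "\<And>t. (V has_vector_derivative V t ** \<Lambda> t) (at t)"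
  shows "(\<forall>t. V t = V 0 ** mexp (t *\<^sub>R \<Lambda> 0)) \<longleftrightarrow> (\<forall>t. \<Lambda> t = \<Lambda> 0)"
proof
  assume V_eq: "\<forall>t. V t = V 0 ** mexp (t *\<^sub>R \<Lambda> 0)"
  show "\<forall>t. \<Lambda> t = \<Lambda> 0"
  proof
    fix t
    have "((\<lambda>s. V 0 ** mexp (s *\<^sub>R \<Lambda> 0)) has_vector_derivative
        V 0 ** (mexp (t *\<^sub>R \<Lambda> 0) ** \<Lambda> 0)) (at t)"
      using has_vector_derivative_matrix_mult[OF has_vector_derivative_const
          has_vector_derivative_mexp, of "V 0" "\<Lambda> 0" t]
      by simp
    moreover have "(\<lambda>s. V 0 ** mexp (s *\<^sub>R \<Lambda> 0)) = V"
      by (rule ext) (rule V_eq[rule_format, symmetric])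
    ultimately have "V t ** \<Lambda> t = V 0 ** mexp (t *\<^sub>R \<Lambda> 0) ** \<Lambda> 0"
      using vector_derivative_unique_at[OF dV] by (simp add: matrix_mul_assoc)
    also have "\<dots> = V t ** \<Lambda> 0"
      by (simp only: V_eq[rule_format, of t])
    finally have "transpose (V t) ** (V t ** \<Lambda> t) = transpose (V t) ** (V t ** \<Lambda> 0)"
      by simp
    then show "\<Lambda> t = \<Lambda> 0"
      using orth by (simp add: matrix_mul_assoc orthogonal_matrix_def)
  qed
next
  assume const: "\<forall>t. \<Lambda> t = \<Lambda> 0"
  define E where "E s = mexp (s *\<^sub>R - \<Lambda> 0)" for s
  have "((\<lambda>s. V s ** E s) has_vector_derivative 0) (at t)" for t
  proof -
    have "((\<lambda>s. V s ** E s) has_vector_derivative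
        V t ** (E t ** - \<Lambda> 0) + V t ** \<Lambda> 0 ** E t) (at t)"
      unfolding E_def
      by (intro has_vector_derivative_matrix_mult has_vector_derivative_mexp
          dV[of t, unfolded const[rule_format, of t]])
    moreover have "V t ** (E t ** - \<Lambda> 0) + V t ** \<Lambda> 0 ** E t = 0"
      unfolding E_def mexp_scaleR_commute
      by (simp add: matrix_mul_assoc matrix_mult_minus_left matrix_mult_minus_right)
    ultimately show ?thesis
      by simp
  qed
  then have VE: "V t ** E t = V 0" for t
    using has_vector_derivative_zero_imp_const[of "\<lambda>s. V s ** E s"] by (simp add: E_def mexp_zero)
  show "\<forall>t. V t = V 0 ** mexp (t *\<^sub>R \<Lambda> 0)"
  proof
    fix t
    have "V t = V t ** (E t ** mexp (t *\<^sub>R \<Lambda> 0))"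
      using mexp_minus_mult[of "t *\<^sub>R \<Lambda> 0"] by (simp add: E_def)
    then show "V t = V 0 ** mexp (t *\<^sub>R \<Lambda> 0)"
      by (simp add: matrix_mul_assoc VE)
  qed
qed

section \<open>Block decomposition\<close>

lemma bij_enum_pos: "bij_betw (enum_pos :: 'a::finite \<Rightarrow> nat) UNIV {0..<CARD('a)}"
proof -
  have "\<exists>f. bij_betw f (UNIV :: 'a set) {0..<CARD('a)}"
    using ex_bij_betw_finite_nat[of "UNIV :: 'a set"] by simp
  then show ?thesis
    unfolding enum_pos_def by (rule someI_ex)
qed

lemma enum_pos_less: "enum_pos (x :: 'a::finite) < CARD('a)"
  using bij_enum_pos[where 'a='a] by (auto simp: bij_betw_def)

lemma enum_pos_inject: "enum_pos (x :: 'a::finite) = enum_pos y \<longleftrightarrow> x = y"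
  using bij_enum_pos[where 'a='a] by (auto simp: bij_betw_def inj_on_def)

lemma enum_pos_surj: "k < CARD('a) \<Longrightarrow> \<exists>x :: 'a::finite. enum_pos x = k"
proof -
  assume "k < CARD('a)"
  then have "k \<in> range (enum_pos :: 'a \<Rightarrow> nat)"
    using bij_enum_pos[where 'a='a] by (simp add: bij_betw_def)
  then show ?thesis
    by auto
qed

context
  fixes ns :: "nat \<Rightarrow> nat" and d n :: nat
  assumes ns_pos: "0 < ns 1"
    and ns_increasing: "\<forall>k. 1 \<le> k \<and> k < d \<longrightarrow> ns k < ns (Suc k)"
    and ns_less: "ns d < n"
begin

lemma bnd_strict_mono:
  assumes "k < k'" "k' \<le> d + 1"
  shows "bnd ns d n k < bnd ns d n k'"
proof (rule lift_Suc_mono_less_ivl[where f = "bnd ns d n" and N = "{..d}"])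
  show "bnd ns d n i < bnd ns d n (Suc i)" if "i \<in> {..d}" for i
    using that ns_pos ns_increasing ns_less by (auto simp: bnd_def)
qed (use assms in auto)

lemma bnd_mono:
  assumes "k \<le> k'" "k' \<le> d + 1"
  shows "bnd ns d n k \<le> bnd ns d n k'"
proof (cases "k = k'")
  case False
  then have "k < k'"
    using assms(1) by simp
  then show ?thesis
    using bnd_strict_mono[of k k'] assms(2) by simp
qed simp

lemma ex1_bnd_interval:
  assumes "p < n"
  shows "\<exists>!k. 1 \<le> k \<and> k \<le> d + 1 \<and> bnd ns d n (k - 1) \<le> p \<and> p < bnd ns d n k"
proof
  define k where "k = (LEAST k. p < bnd ns d n k)"
  have ex: "p < bnd ns d n (d + 1)"
    using assms by (simp add: bnd_def)
  then have "p < bnd ns d n k" "k \<le> d + 1"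
    unfolding k_def by (auto intro: LeastI Least_le)
  moreover have "k \<noteq> 0"
    using \<open>p < bnd ns d n k\<close> by (auto simp: bnd_def split: if_splits)
  moreover have "\<not> p < bnd ns d n (k - 1)"
    unfolding k_def by (rule not_less_Least) (use \<open>k \<noteq> 0\<close> in \<open>simp add: k_def\<close>)
  ultimately show "1 \<le> k \<and> k \<le> d + 1 \<and> bnd ns d n (k - 1) \<le> p \<and> p < bnd ns d n k"
    by simp
  fix k'
  assume k': "1 \<le> k' \<and> k' \<le> d + 1 \<and> bnd ns d n (k' - 1) \<le> p \<and> p < bnd ns d n k'"
  show "k' = k"
  proof (rule ccontr)
    assume "k' \<noteq> k"
    then consider "k' < k" | "k < k'"
      by linarith
    then show False
    proof cases
      case 1
      then have "bnd ns d n k' \<le> bnd ns d n (k - 1)"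
        using \<open>k \<le> d + 1\<close> by (intro bnd_mono) auto
      then show False
        using k' \<open>\<not> p < bnd ns d n (k - 1)\<close> by linarith
    next
      case 2
      then have "bnd ns d n k \<le> bnd ns d n (k' - 1)"
        using k' by (intro bnd_mono) auto
      then show False
        using k' \<open>p < bnd ns d n k\<close> by linarith
    qed
  qed
qed

end

definition block_of :: "(nat \<Rightarrow> nat) \<Rightarrow> nat \<Rightarrow> 'n::finite \<Rightarrow> 'k::finite" where
  "block_of ns d i = (THE \<kappa>. inblk ns d (enum_pos \<kappa> + 1) i)"

lemma inblk_iff_block_of:
  assumes "CARD('k::finite) = d + 1"
    and "0 < ns 1" "\<forall>k. 1 \<le> k \<and> k < d \<longrightarrow> ns k < ns (Suc k)" "ns d < CARD('n::finite)"
  shows "inblk ns d (enum_pos \<kappa> + 1) (i :: 'n) \<longleftrightarrow> block_of ns d i = (\<kappa> :: 'k)"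
proof -
  obtain k where k: "1 \<le> k \<and> k \<le> d + 1 \<and> bnd ns d CARD('n) (k - 1) \<le> enum_pos i \<and>
        enum_pos i < bnd ns d CARD('n) k"
      and k_unique: "\<And>k'. 1 \<le> k' \<and> k' \<le> d + 1 \<and> bnd ns d CARD('n) (k' - 1) \<le> enum_pos i \<and>
        enum_pos i < bnd ns d CARD('n) k' \<Longrightarrow> k' = k"
    using ex1_bnd_interval[OF assms(2-4) enum_pos_less[of i]] by blast
  have inblk_iff: "inblk ns d (enum_pos \<mu> + 1) i \<longleftrightarrow> enum_pos \<mu> + 1 = k" for \<mu> :: 'k
    using k k_unique[of "enum_pos \<mu> + 1"] enum_pos_less[of \<mu>] assms(1)
    by (auto simp: inblk_def)
  have "k - 1 < CARD('k)"
    using k assms(1) by linarith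
  then obtain \<mu> :: 'k where \<mu>: "enum_pos \<mu> = k - 1"
    using enum_pos_surj by blast
  have ex1: "\<exists>!\<mu> :: 'k. inblk ns d (enum_pos \<mu> + 1) i"
  proof (rule ex1I[of _ \<mu>])
    show "inblk ns d (enum_pos \<mu> + 1) i"
      unfolding inblk_iff using \<mu> k by simp
    show "\<mu>' = \<mu>" if "inblk ns d (enum_pos \<mu>' + 1) i" for \<mu>' :: 'k
    proof -
      have "enum_pos \<mu>' = enum_pos \<mu>"
        using that \<mu> k unfolding inblk_iff by simp
      then show ?thesis
        by (simp add: enum_pos_inject)
    qed
  qed
  have "inblk ns d (enum_pos (block_of ns d i :: 'k) + 1) i"
    unfolding block_of_def by (rule theI'[OF ex1])
  with ex1 show ?thesis
    by blast
qed

definition block_sign :: "('n \<Rightarrow> 'k) \<Rightarrow> 'k \<Rightarrow> 'n \<Rightarrow> real" where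
  "block_sign b \<kappa> i = (if b i = \<kappa> then 1 else -1)"

definition blockJ :: "('n::finite \<Rightarrow> 'k::finite) \<Rightarrow> (real^'n^'n)^'k" where
  "blockJ b = (\<chi> \<kappa> i j. if i = j then block_sign b \<kappa> i else 0)"

definition block_offdiag :: "('n \<Rightarrow> 'k) \<Rightarrow> real^'n^'n \<Rightarrow> bool" where
  "block_offdiag b L \<longleftrightarrow> (\<forall>i j. b i = b j \<longrightarrow> L $ i $ j = 0)"

lemma matrix_mult_blockJ: "(A ** blockJ b $ \<kappa>) $ i $ j = A $ i $ j * block_sign b \<kappa> j"
  by (simp add: matrix_matrix_mult_def blockJ_def if_distrib if_distribR sum.delta' cong: if_cong)

lemma blockJ_matrix_mult: "(blockJ b $ \<kappa> ** A) $ i $ j = block_sign b \<kappa> i * A $ i $ j"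
  by (simp add: matrix_matrix_mult_def blockJ_def if_distrib if_distribR sum.delta cong: if_cong)

lemma blockJ_mult_self: "blockJ b $ \<kappa> ** blockJ b $ \<kappa> = mat 1"
  by (simp add: vec_eq_iff matrix_mult_blockJ) (simp add: blockJ_def mat_def block_sign_def)

lemma blockJ_mult_distinct:
  "\<kappa> \<noteq> \<mu> \<Longrightarrow> blockJ b $ \<kappa> ** blockJ b $ \<mu> = - mat 1 - blockJ b $ \<kappa> - blockJ b $ \<mu>"
  by (simp add: vec_eq_iff matrix_mult_blockJ) (auto simp: blockJ_def mat_def block_sign_def)

lemma Jm_eq_blockJ:
  assumes "CARD('k::finite) = d + 1"
    and "0 < ns 1" "\<forall>k. 1 \<le> k \<and> k < d \<longrightarrow> ns k < ns (Suc k)" "ns d < CARD('n::finite)"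
  shows "(Jm ns \<kappa> :: real^'n^'n) = blockJ (block_of ns d) $ (\<kappa> :: 'k)"
proof -
  have card: "CARD('k) - 1 = d"
    using assms(1) by simp
  show ?thesis
    unfolding Jm_def blockJ_def block_sign_def card inblk_iff_block_of[OF assms] by simp
qed

lemma block_offdiag_block_of:
  assumes "CARD('k::finite) = d + 1"
    and "0 < ns 1" "\<forall>k. 1 \<le> k \<and> k < d \<longrightarrow> ns k < ns (Suc k)" "ns d < CARD('n::finite)"
    and "\<forall>k i j. inblk ns d k i \<and> inblk ns d k j \<longrightarrow> L $ i $ j = 0"
  shows "block_offdiag (block_of ns d :: 'n \<Rightarrow> 'k) L"
  unfolding block_offdiag_def using assms(5) inblk_iff_block_of[OF assms(1-4)] by blast

section \<open>Conjugation and commutators of tuples of matrices\<close>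

definition conj_tuple :: "real^'n::finite^'n \<Rightarrow> (real^'n^'n)^'k::finite \<Rightarrow> (real^'n^'n)^'k" where
  "conj_tuple W x = (\<chi> \<kappa>. W ** x $ \<kappa> ** transpose W)"

definition ad :: "real^'n::finite^'n \<Rightarrow> (real^'n^'n)^'k::finite \<Rightarrow> (real^'n^'n)^'k" where
  "ad Y x = (\<chi> \<kappa>. Y ** x $ \<kappa> - x $ \<kappa> ** Y)"

lemma conj_tuple_conj_tuple: "conj_tuple A (conj_tuple B x) = conj_tuple (A ** B) x"
  by (simp add: conj_tuple_def matrix_transpose_mul matrix_mul_assoc)

lemma conj_tuple_transpose_cancel:
  "orthogonal_matrix W \<Longrightarrow> conj_tuple (transpose W) (conj_tuple W x) = x"
  by (simp add: conj_tuple_conj_tuple orthogonal_matrix_def) (simp add: conj_tuple_def)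

lemma bounded_linear_conj_tuple: "bounded_linear (conj_tuple W)"
  unfolding linear_conv_bounded_linear[symmetric]
  by (intro linearI) (simp_all add: conj_tuple_def vec_eq_iff matrix_add_ldistrib
      matrix_add_rdistrib matrix_scalar_ac scalar_matrix_assoc)

lemma conj_tuple_add: "conj_tuple W (x + y) = conj_tuple W x + conj_tuple W y"
  by (rule linear_add[OF bounded_linear.linear[OF bounded_linear_conj_tuple]])

lemma conj_tuple_zero [simp]: "conj_tuple W 0 = 0"
  by (rule linear_0[OF bounded_linear.linear[OF bounded_linear_conj_tuple]])

lemma inner_conj_matrix:
  "inner (W ** A ** transpose W) B = inner A (transpose W ** B ** (W :: real^'n::finite^'n))"
proof -
  have "inner (W ** A ** transpose W) B = inner (W ** A) (B ** W)"
    using inner_matrix_mult_right[of "W ** A" "transpose W" B] by simp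
  also have "\<dots> = inner A (transpose W ** B ** W)"
    by (simp add: inner_matrix_mult_left matrix_mul_assoc)
  finally show ?thesis .
qed

lemma inner_conj_tuple: "inner (conj_tuple W x) y = inner x (conj_tuple (transpose W) y)"
proof -
  have "inner (conj_tuple W x) y = (\<Sum>\<kappa>\<in>UNIV. inner (W ** x $ \<kappa> ** transpose W) (y $ \<kappa>))"
    unfolding inner_vec_def[of "conj_tuple W x"] by (simp add: conj_tuple_def)
  also have "\<dots> = inner x (conj_tuple (transpose W) y)"
    unfolding inner_vec_def[of x] by (simp add: conj_tuple_def inner_conj_matrix)
  finally show ?thesis .
qed

lemma bounded_linear_ad: "bounded_linear (\<lambda>Y. ad Y x)"
  unfolding linear_conv_bounded_linear[symmetric]
  by (intro linearI) (simp_all add: ad_def vec_eq_iff matrix_add_rdistrib matrix_add_ldistrib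
      matrix_scalar_ac scalar_matrix_assoc[symmetric] algebra_simps)

lemma ad_zero [simp]: "ad 0 x = 0"
  by (simp add: ad_def vec_eq_iff)

lemma has_vector_derivative_conj_tuple:
  assumes "(A has_vector_derivative A') (at t)" "(x has_vector_derivative x') (at t)"
  shows "((\<lambda>s. conj_tuple (A s) (x s)) has_vector_derivative (\<chi> \<kappa>.
      A t ** x t $ \<kappa> ** transpose A' + (A t ** x' $ \<kappa> + A' ** x t $ \<kappa>) ** transpose (A t))) (at t)"
  unfolding conj_tuple_def
  by (intro has_vector_derivative_vec_lambda has_vector_derivative_matrix_mult
      has_vector_derivative_transpose has_vector_derivative_vec_nth assms)

lemma has_vector_derivative_conj_tuple_skew:
  assumes "(A has_vector_derivative A t ** Y) (at t)" "transpose Y = - Y"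
    and "(x has_vector_derivative x') (at t)"
  shows "((\<lambda>s. conj_tuple (A s) (x s)) has_vector_derivative
      conj_tuple (A t) (ad Y (x t) + x')) (at t)"
proof -
  have "A t ** X ** transpose (A t ** Y) + (A t ** X' + A t ** Y ** X) ** transpose (A t) =
      A t ** (Y ** X - X ** Y + X') ** transpose (A t)" for X X'
    by (simp add: matrix_transpose_mul assms(2) matrix_add_ldistrib matrix_add_rdistrib
        matrix_mult_diff_left matrix_mult_diff_right matrix_mult_minus_left matrix_mult_minus_right
        matrix_mul_assoc)
  then show ?thesis
    using has_vector_derivative_conj_tuple[OF assms(1,3)] by (simp add: conj_tuple_def ad_def)
qed

lemma ad_blockJ_nth:
  "ad Y (blockJ b) $ \<kappa> $ i $ j = Y $ i $ j * (block_sign b \<kappa> j - block_sign b \<kappa> i)"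
  by (simp add: ad_def matrix_mult_blockJ blockJ_matrix_mult algebra_simps)

lemma ad_ad_blockJ_nth:
  "ad X (ad X (blockJ b)) $ \<kappa> $ i $ j =
    (\<Sum>l\<in>UNIV. X $ i $ l * X $ l $ j * (block_sign b \<kappa> j - 2 * block_sign b \<kappa> l + block_sign b \<kappa> i))"
  by (simp add: ad_def[of X "ad X (blockJ b)"] matrix_matrix_mult_def ad_blockJ_nth
      sum_subtractf[symmetric] algebra_simps)

section \<open>The flag manifold of a block decomposition\<close>

definition flag_of :: "('n::finite \<Rightarrow> 'k::finite) \<Rightarrow> ((real^'n^'n)^'k) set" where
  "flag_of b = {conj_tuple V (blockJ b) | V. orthogonal_matrix V}"

lemma conj_tuple_mem_flag_of:
  assumes "orthogonal_matrix W" "x \<in> flag_of b"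
  shows "conj_tuple W x \<in> flag_of b"
proof -
  obtain V where "orthogonal_matrix V" "x = conj_tuple V (blockJ b)"
    using assms(2) unfolding flag_of_def by blast
  then have "orthogonal_matrix (W ** V)" "conj_tuple W x = conj_tuple (W ** V) (blockJ b)"
    using assms(1) by (simp_all add: orthogonal_matrix_mul conj_tuple_conj_tuple)
  then show ?thesis
    unfolding flag_of_def by blast
qed

lemma flag_of_relations:
  assumes "x \<in> flag_of b"
  shows "x $ \<kappa> ** x $ \<kappa> = mat 1"
    and "\<kappa> \<noteq> \<mu> \<Longrightarrow> x $ \<kappa> ** x $ \<mu> = - mat 1 - x $ \<kappa> - x $ \<mu>"
proof -
  obtain V where V: "orthogonal_matrix V" "x = conj_tuple V (blockJ b)"
    using assms unfolding flag_of_def by blast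
  have mult: "(V ** A ** transpose V) ** (V ** B ** transpose V) = V ** (A ** B) ** transpose V" for A B
    using V(1) by (simp add: matrix_mul_assoc orthogonal_matrix_def)
       (simp add: matrix_mul_assoc[symmetric])
  show "x $ \<kappa> ** x $ \<kappa> = mat 1"
    using V by (simp add: conj_tuple_def mult blockJ_mult_self orthogonal_matrix_def)
  show "x $ \<kappa> ** x $ \<mu> = - mat 1 - x $ \<kappa> - x $ \<mu>" if "\<kappa> \<noteq> \<mu>"
    using V that
    by (simp add: conj_tuple_def mult blockJ_mult_distinct orthogonal_matrix_def
        matrix_mult_diff_left matrix_mult_diff_right matrix_mult_minus_left matrix_mult_minus_right)
qed

lemma tangent_space_flag_of_relations:
  assumes "v \<in> tangent_space (flag_of b) x"
  shows "v $ \<kappa> ** x $ \<kappa> + x $ \<kappa> ** v $ \<kappa> = 0"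
    and "\<kappa> \<noteq> \<mu> \<Longrightarrow> v $ \<kappa> ** x $ \<mu> + x $ \<kappa> ** v $ \<mu> + v $ \<kappa> + v $ \<mu> = 0"
proof -
  obtain \<gamma> where \<gamma>: "\<And>t. \<gamma> t \<in> flag_of b" "\<gamma> 0 = x" "(\<gamma> has_vector_derivative v) (at 0)"
    using assms unfolding tangent_space_def by blast
  have d\<gamma>: "((\<lambda>t. \<gamma> t $ \<kappa>' ** \<gamma> t $ \<mu>') has_vector_derivative
      x $ \<kappa>' ** v $ \<mu>' + v $ \<kappa>' ** x $ \<mu>') (at 0)" for \<kappa>' \<mu>'
    using has_vector_derivative_matrix_mult[OF has_vector_derivative_vec_nth[OF \<gamma>(3)]
        has_vector_derivative_vec_nth[OF \<gamma>(3)]] \<gamma>(2) by simp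
  have "((\<lambda>t. \<gamma> t $ \<kappa> ** \<gamma> t $ \<kappa>) has_vector_derivative 0) (at 0)"
    using flag_of_relations(1)[OF \<gamma>(1)] by simp
  from vector_derivative_unique_at[OF d\<gamma> this]
  show "v $ \<kappa> ** x $ \<kappa> + x $ \<kappa> ** v $ \<kappa> = 0"
    by (simp add: add.commute)
  assume "\<kappa> \<noteq> \<mu>"
  have "((\<lambda>t. - mat 1 - \<gamma> t $ \<kappa> - \<gamma> t $ \<mu>) has_vector_derivative - 0 - v $ \<kappa> - v $ \<mu>) (at 0)"
    by (intro has_vector_derivative_diff has_vector_derivative_minus has_vector_derivative_const
        has_vector_derivative_vec_nth \<gamma>(3))
  then have "((\<lambda>t. \<gamma> t $ \<kappa> ** \<gamma> t $ \<mu>) has_vector_derivative - v $ \<kappa> - v $ \<mu>) (at 0)"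
    using flag_of_relations(2)[OF \<gamma>(1) \<open>\<kappa> \<noteq> \<mu>\<close>] by simp
  from vector_derivative_unique_at[OF d\<gamma> this]
  show "v $ \<kappa> ** x $ \<mu> + x $ \<kappa> ** v $ \<mu> + v $ \<kappa> + v $ \<mu> = 0"
    by (simp add: algebra_simps)
qed

lemma tangent_space_flag_of_conj:
  assumes "orthogonal_matrix W" "v \<in> tangent_space (flag_of b) x"
  shows "conj_tuple W v \<in> tangent_space (flag_of b) (conj_tuple W x)"
proof -
  obtain \<gamma> where \<gamma>: "\<And>t. \<gamma> t \<in> flag_of b" "\<gamma> 0 = x" "(\<gamma> has_vector_derivative v) (at 0)"
    using assms(2) unfolding tangent_space_def by blast
  show ?thesis
    unfolding tangent_space_def
  proof (intro CollectI exI[of _ "\<lambda>s. conj_tuple W (\<gamma> s)"] conjI allI)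
    show "conj_tuple W (\<gamma> t) \<in> flag_of b" for t
      by (rule conj_tuple_mem_flag_of[OF assms(1) \<gamma>(1)])
    show "((\<lambda>s. conj_tuple W (\<gamma> s)) has_vector_derivative conj_tuple W v) (at 0)"
      by (rule bounded_linear.has_vector_derivative[OF bounded_linear_conj_tuple \<gamma>(3)])
  qed (simp add: \<gamma>(2))
qed

lemma conj_ad_mem_tangent_space:
  assumes "orthogonal_matrix W" "transpose Y = - Y"
  shows "conj_tuple W (ad Y (blockJ b)) \<in> tangent_space (flag_of b) (conj_tuple W (blockJ b))"
proof -
  let ?V = "\<lambda>s. W ** mexp (s *\<^sub>R Y)"
  have "(?V has_vector_derivative ?V 0 ** Y) (at 0)"
    using has_vector_derivative_matrix_mult[OF has_vector_derivative_const[of W]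
        has_vector_derivative_mexp[of Y 0]]
    by (simp add: matrix_mul_assoc)
  from has_vector_derivative_conj_tuple_skew[OF this assms(2) has_vector_derivative_const]
  have "((\<lambda>s. conj_tuple (?V s) (blockJ b)) has_vector_derivative
      conj_tuple (?V 0) (ad Y (blockJ b) + 0)) (at 0)" .
  moreover have "orthogonal_matrix (?V s)" for s
    using assms by (intro orthogonal_matrix_mul orthogonal_matrix_mexp) (simp_all add: transpose_scalar)
  then have "conj_tuple (?V s) (blockJ b) \<in> flag_of b" for s
    unfolding flag_of_def by blast
  ultimately show ?thesis
    unfolding tangent_space_def
    by (intro CollectI exI[of _ "\<lambda>s. conj_tuple (?V s) (blockJ b)"]) (simp add: mexp_zero)
qed

lemma tangent_space_blockJ_nth_relations:
  assumes "u \<in> tangent_space (flag_of b) (blockJ b)"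
  shows "u $ \<kappa> $ i $ j * (block_sign b \<kappa> j + block_sign b \<kappa> i) = 0"
    and "\<kappa> \<noteq> \<mu> \<Longrightarrow> u $ \<kappa> $ i $ j * block_sign b \<mu> j + block_sign b \<kappa> i * u $ \<mu> $ i $ j
      + u $ \<kappa> $ i $ j + u $ \<mu> $ i $ j = 0"
proof -
  have "(u $ \<kappa> ** blockJ b $ \<kappa> + blockJ b $ \<kappa> ** u $ \<kappa>) $ i $ j = 0"
    using tangent_space_flag_of_relations(1)[OF assms] by simp
  then show "u $ \<kappa> $ i $ j * (block_sign b \<kappa> j + block_sign b \<kappa> i) = 0"
    by (simp add: matrix_mult_blockJ blockJ_matrix_mult algebra_simps)
  assume "\<kappa> \<noteq> \<mu>"
  then have "(u $ \<kappa> ** blockJ b $ \<mu> + blockJ b $ \<kappa> ** u $ \<mu> + u $ \<kappa> + u $ \<mu>) $ i $ j = 0"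
    using tangent_space_flag_of_relations(2)[OF assms] by simp
  then show "u $ \<kappa> $ i $ j * block_sign b \<mu> j + block_sign b \<kappa> i * u $ \<mu> $ i $ j
      + u $ \<kappa> $ i $ j + u $ \<mu> $ i $ j = 0"
    by (simp add: matrix_mult_blockJ blockJ_matrix_mult)
qed

lemma sum_ad_ad_blockJ_nth_tangent:
  assumes X: "block_offdiag b X" and u: "u \<in> tangent_space (flag_of b) (blockJ b)"
  shows "(\<Sum>\<kappa>\<in>UNIV. ad X (ad X (blockJ b)) $ \<kappa> $ i $ j * u $ \<kappa> $ i $ j) = 0"
proof (cases "b i = b j")
  case True
  then have "u $ \<kappa> $ i $ j = 0" for \<kappa>
    using tangent_space_blockJ_nth_relations(1)[OF u, of \<kappa> i j]
    by (auto simp: block_sign_def split: if_splits)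
  then show ?thesis
    by simp
next
  case False
  let ?f = "\<lambda>\<kappa>. ad X (ad X (blockJ b)) $ \<kappa> $ i $ j * u $ \<kappa> $ i $ j"
  have "u $ \<kappa> $ i $ j = 0" if "\<kappa> \<notin> {b i, b j}" for \<kappa>
    using tangent_space_blockJ_nth_relations(1)[OF u, of \<kappa> i j] that
    by (auto simp: block_sign_def)
  then have "(\<Sum>\<kappa>\<in>UNIV. ?f \<kappa>) = (\<Sum>\<kappa>\<in>{b i, b j}. ?f \<kappa>)"
    by (intro sum.mono_neutral_right) auto
  also have "\<dots> = ?f (b i) + ?f (b j)"
    using False by simp
  also have "\<dots> = 0"
  proof -
    have "u $ b j $ i $ j = - u $ b i $ i $ j"
      using tangent_space_blockJ_nth_relations(2)[OF u False, of i j] False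
      by (simp add: block_sign_def)
    moreover have "ad X (ad X (blockJ b)) $ b i $ i $ j = ad X (ad X (blockJ b)) $ b j $ i $ j"
      unfolding ad_ad_blockJ_nth
      using X False by (intro sum.cong refl) (auto simp: block_offdiag_def block_sign_def)
    ultimately show ?thesis
      by simp
  qed
  finally show ?thesis .
qed

lemma inner_ad_ad_blockJ_tangent:
  assumes "block_offdiag b X" "u \<in> tangent_space (flag_of b) (blockJ b)"
  shows "inner (ad X (ad X (blockJ b))) u = 0"
proof -
  let ?g = "\<lambda>\<kappa> i j. ad X (ad X (blockJ b)) $ \<kappa> $ i $ j * u $ \<kappa> $ i $ j"
  have "inner (ad X (ad X (blockJ b))) u = (\<Sum>\<kappa>\<in>UNIV. \<Sum>i\<in>UNIV. \<Sum>j\<in>UNIV. ?g \<kappa> i j)"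
    by (simp add: inner_vec_def)
  also have "\<dots> = (\<Sum>i\<in>UNIV. \<Sum>\<kappa>\<in>UNIV. \<Sum>j\<in>UNIV. ?g \<kappa> i j)"
    by (rule sum.swap)
  also have "\<dots> = (\<Sum>i\<in>UNIV. \<Sum>j\<in>UNIV. \<Sum>\<kappa>\<in>UNIV. ?g \<kappa> i j)"
    by (intro sum.cong refl sum.swap)
  also have "\<dots> = 0"
    using sum_ad_ad_blockJ_nth_tangent[OF assms] by simp
  finally show ?thesis .
qed

lemma inner_conj_ad_ad_tangent:
  assumes "orthogonal_matrix W" "block_offdiag b X"
    and "v \<in> tangent_space (flag_of b) (conj_tuple W (blockJ b))"
  shows "inner (conj_tuple W (ad X (ad X (blockJ b)))) v = 0"
proof -
  have "conj_tuple (transpose W) v \<in> tangent_space (flag_of b) (blockJ b)"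
    using tangent_space_flag_of_conj[of "transpose W", OF _ assms(3)] assms(1)
    by (simp add: conj_tuple_transpose_cancel)
  then show ?thesis
    by (simp add: inner_conj_tuple inner_ad_ad_blockJ_tangent assms(2))
qed

lemma orth_proj_eqI:
  fixes x p :: "'a::real_inner"
  assumes "p \<in> T" "\<And>y. y \<in> T \<Longrightarrow> inner (x - p) y = 0"
  shows "orth_proj T x = p"
  unfolding orth_proj_def
proof (rule the_equality)
  show "p \<in> T \<and> (\<forall>y\<in>T. inner (x - p) y = 0)"
    using assms by blast
  fix q
  assume q: "q \<in> T \<and> (\<forall>y\<in>T. inner (x - q) y = 0)"
  then have "inner (x - q) p = 0" "inner (x - p) p = 0" "inner (x - q) q = 0" "inner (x - p) q = 0"
    using assms by auto
  then have "inner (p - q) (p - q) = 0"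
    by (simp add: inner_diff_left inner_diff_right inner_commute)
  then show "q = p"
    by simp
qed

lemma orth_proj_flag_acceleration:
  assumes "orthogonal_matrix W" "block_offdiag b X" "transpose L = - L"
  shows "orth_proj (tangent_space (flag_of b) (conj_tuple W (blockJ b)))
      (conj_tuple W (ad X (ad X (blockJ b))) + conj_tuple W (ad L (blockJ b)))
    = conj_tuple W (ad L (blockJ b))"
  using assms by (intro orth_proj_eqI) (simp_all add: conj_ad_mem_tangent_space inner_conj_ad_ad_tangent)

text \<open>For \<open>i\<close>, \<open>j\<close> in different blocks, \<open>[Y, J\<^bsub>b i\<^esub>]\<^sub>i\<^sub>j = -2 Y\<^sub>i\<^sub>j\<close>.\<close>

definition block_extract :: "('n::finite \<Rightarrow> 'k::finite) \<Rightarrow> (real^'n^'n)^'k \<Rightarrow> real^'n^'n" where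
  "block_extract b x = (\<chi> i j. if b i = b j then 0 else - x $ b i $ i $ j / 2)"

lemma block_extract_ad_blockJ: "block_offdiag b Y \<Longrightarrow> block_extract b (ad Y (blockJ b)) = Y"
  by (auto simp: vec_eq_iff block_extract_def ad_blockJ_nth block_sign_def block_offdiag_def)

lemma bounded_linear_block_extract: "bounded_linear (block_extract b)"
  unfolding linear_conv_bounded_linear[symmetric]
  by (intro linearI) (simp_all add: block_extract_def vec_eq_iff)

lemma block_extract_zero [simp]: "block_extract b 0 = 0"
  by (simp add: block_extract_def vec_eq_iff)

section \<open>Geodesics\<close>

locale horizontal_lift =
  fixes b :: "'n::finite \<Rightarrow> 'k::finite" and V \<Lambda> :: "real \<Rightarrow> real^'n^'n"
  assumes orthogonal: "\<And>t. orthogonal_matrix (V t)"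
    and skew: "\<And>t. transpose (\<Lambda> t) = - \<Lambda> t"
    and has_derivative_V: "\<And>t. (V has_vector_derivative V t ** \<Lambda> t) (at t)"
    and offdiag: "\<And>t. block_offdiag b (\<Lambda> t)"
begin

lemma velocity:
  "((\<lambda>s. conj_tuple (V s) (blockJ b)) has_vector_derivative conj_tuple (V t) (ad (\<Lambda> t) (blockJ b))) (at t)"
  using has_vector_derivative_conj_tuple_skew[OF has_derivative_V skew has_vector_derivative_const]
  by simp

lemma acceleration:
  assumes "(\<Lambda> has_vector_derivative L) (at t)"
  shows "((\<lambda>s. conj_tuple (V s) (ad (\<Lambda> s) (blockJ b))) has_vector_derivative
      conj_tuple (V t) (ad (\<Lambda> t) (ad (\<Lambda> t) (blockJ b))) + conj_tuple (V t) (ad L (blockJ b))) (at t)"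
  using has_vector_derivative_conj_tuple_skew[OF has_derivative_V skew
      bounded_linear.has_vector_derivative[OF bounded_linear_ad assms]]
  by (simp add: conj_tuple_add)

lemma generator_differentiable:
  assumes "\<And>t. (c' has_vector_derivative c'' t) (at t)"
    and "\<And>t. c' t = conj_tuple (V t) (ad (\<Lambda> t) (blockJ b))"
  shows "\<Lambda> differentiable (at t)"
proof -
  have \<Lambda>_eq: "\<Lambda> = (\<lambda>s. block_extract b (conj_tuple (transpose (V s)) (c' s)))"
    by (simp add: fun_eq_iff assms(2) conj_tuple_transpose_cancel orthogonal
        block_extract_ad_blockJ offdiag)
  show ?thesis
    unfolding \<Lambda>_eq
    by (rule differentiableI_vector[OF bounded_linear.has_vector_derivative[OF bounded_linear_block_extract
        has_vector_derivative_conj_tuple[OF has_vector_derivative_transpose[OF has_derivative_V] assms(1)]]])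
qed

lemma skew_derivative:
  assumes "(\<Lambda> has_vector_derivative L) (at t)"
  shows "transpose L = - L"
proof -
  have "((\<lambda>s. transpose (\<Lambda> s)) has_vector_derivative - L) (at t)"
    unfolding skew by (rule has_vector_derivative_minus[OF assms])
  then show ?thesis
    using has_vector_derivative_transpose[OF assms] vector_derivative_unique_at by blast
qed

lemma offdiag_derivative:
  assumes "(\<Lambda> has_vector_derivative L) (at t)"
  shows "block_offdiag b L"
  unfolding block_offdiag_def
proof (intro allI impI)
  fix i j
  assume "b i = b j"
  then have "(\<lambda>s. \<Lambda> s $ i $ j) = (\<lambda>s. 0)"
    using offdiag by (simp add: block_offdiag_def)
  then have "((\<lambda>s. \<Lambda> s $ i $ j) has_vector_derivative 0) (at t)"
    by simp
  then show "L $ i $ j = 0"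
    using has_vector_derivative_vec_nth[OF has_vector_derivative_vec_nth[OF assms]]
      vector_derivative_unique_at by blast
qed

lemma geodesic_imp_generator_const:
  assumes "geodesic (flag_of b) (\<lambda>t. conj_tuple (V t) (blockJ b))"
  shows "\<Lambda> t = \<Lambda> 0"
proof -
  obtain c' c'' where c': "\<And>t. ((\<lambda>s. conj_tuple (V s) (blockJ b)) has_vector_derivative c' t) (at t)"
    and c'': "\<And>t. (c' has_vector_derivative c'' t) (at t)"
    and proj: "\<And>t. orth_proj (tangent_space (flag_of b) (conj_tuple (V t) (blockJ b))) (c'' t) = 0"
    using assms unfolding geodesic_def by blast
  have c'_eq: "c' t = conj_tuple (V t) (ad (\<Lambda> t) (blockJ b))" for t
    using c' velocity by (rule vector_derivative_unique_at)
  define L where "L t = vector_derivative \<Lambda> (at t)" for t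
  have d\<Lambda>: "(\<Lambda> has_vector_derivative L t) (at t)" for t
    unfolding L_def vector_derivative_works[symmetric] by (rule generator_differentiable[OF c'' c'_eq])
  have L_zero: "L t = 0" for t
  proof -
    have "(c' has_vector_derivative
        conj_tuple (V t) (ad (\<Lambda> t) (ad (\<Lambda> t) (blockJ b))) + conj_tuple (V t) (ad (L t) (blockJ b))) (at t)"
      using acceleration[OF d\<Lambda>] by (simp add: c'_eq[abs_def])
    then have "c'' t = conj_tuple (V t) (ad (\<Lambda> t) (ad (\<Lambda> t) (blockJ b))) + conj_tuple (V t) (ad (L t) (blockJ b))"
      using c'' vector_derivative_unique_at by blast
    then have "conj_tuple (V t) (ad (L t) (blockJ b)) = 0"
      using proj[of t] orth_proj_flag_acceleration[OF orthogonal offdiag skew_derivative[OF d\<Lambda>]]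
      by simp
    then have "ad (L t) (blockJ b) = 0"
      using conj_tuple_transpose_cancel[OF orthogonal, of t "ad (L t) (blockJ b)"] by simp
    then show "L t = 0"
      using block_extract_ad_blockJ[OF offdiag_derivative[OF d\<Lambda>[of t]]] by simp
  qed
  show ?thesis
    using d\<Lambda> by (intro has_vector_derivative_zero_imp_const) (simp add: L_zero)
qed

lemma generator_const_imp_geodesic:
  assumes "\<And>t. \<Lambda> t = \<Lambda> 0"
  shows "geodesic (flag_of b) (\<lambda>t. conj_tuple (V t) (blockJ b))"
proof -
  have "(\<lambda>_. \<Lambda> 0) = \<Lambda>"
    by (rule ext) (rule assms[symmetric])
  then have d\<Lambda>: "(\<Lambda> has_vector_derivative 0) (at t)" for t
    using has_vector_derivative_const[of "\<Lambda> 0" "at t"] by (simp only:)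
  have "((\<lambda>s. conj_tuple (V s) (ad (\<Lambda> s) (blockJ b))) has_vector_derivative
      conj_tuple (V t) (ad (\<Lambda> t) (ad (\<Lambda> t) (blockJ b)))) (at t)" for t
    using acceleration[OF d\<Lambda>] by simp
  moreover have "orth_proj (tangent_space (flag_of b) (conj_tuple (V t) (blockJ b)))
      (conj_tuple (V t) (ad (\<Lambda> t) (ad (\<Lambda> t) (blockJ b)))) = 0" for t
    using orth_proj_flag_acceleration[OF orthogonal[of t] offdiag[of t], of 0]
    by (simp add: transpose_def vec_eq_iff)
  moreover have "conj_tuple (V t) (blockJ b) \<in> flag_of b" for t
    unfolding flag_of_def using orthogonal by blast
  ultimately show ?thesis
    unfolding geodesic_def
    by (intro conjI allI exI[of _ "\<lambda>t. conj_tuple (V t) (ad (\<Lambda> t) (blockJ b))"]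
        exI[of _ "\<lambda>t. conj_tuple (V t) (ad (\<Lambda> t) (ad (\<Lambda> t) (blockJ b)))"] velocity)
qed

theorem geodesic_iff_eq_mexp:
  "geodesic (flag_of b) (\<lambda>t. conj_tuple (V t) (blockJ b)) \<longleftrightarrow> (\<forall>t. V t = V 0 ** mexp (t *\<^sub>R \<Lambda> 0))"
  unfolding eq_mexp_iff_generator_const[OF orthogonal has_derivative_V]
  using geodesic_imp_generator_const generator_const_imp_geodesic by blast

end

theorem proposition4p6:
  fixes V \<Lambda> :: "real \<Rightarrow> real^'n::finite^'n"
    and ns :: "nat \<Rightarrow> nat" and d :: nat
  assumes "d \<ge> 1"
    and "CARD('k::finite) = d + 1"
    and "0 < ns 1"
    and "\<forall>k. 1 \<le> k \<and> k < d \<longrightarrow> ns k < ns (Suc k)"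
    and "ns d < CARD('n)"
    and "\<forall>t. orthogonal_matrix (V t)"
    and "\<forall>t. V differentiable (at t)"
    and "\<forall>t. transpose (\<Lambda> t) = - \<Lambda> t"
    and "\<forall>t. (V has_vector_derivative (V t ** \<Lambda> t)) (at t)"
    and "\<forall>t k i j. inblk ns d k i \<and> inblk ns d k j \<longrightarrow> \<Lambda> t $ i $ j = 0"
  shows "geodesic (flag ns :: ((real^'n^'n)^'k) set)
           (\<lambda>t. \<chi> \<kappa>::'k. V t ** Jm ns \<kappa> ** transpose (V t))
         \<longleftrightarrow> (\<forall>t. V t = V 0 ** mexp (t *\<^sub>R \<Lambda> 0))"
proof -
  let ?b = "block_of ns d :: 'n \<Rightarrow> 'k"
  have Jm_eq: "Jm ns \<kappa> = blockJ ?b $ \<kappa>" for \<kappa> :: 'k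
    by (rule Jm_eq_blockJ[OF assms(2-5)])
  have flag_eq: "(flag ns :: ((real^'n^'n)^'k) set) = flag_of ?b"
    unfolding flag_def flag_of_def conj_tuple_def Jm_eq ..
  have curve_eq: "(\<lambda>t. \<chi> \<kappa>::'k. V t ** Jm ns \<kappa> ** transpose (V t)) = (\<lambda>t. conj_tuple (V t) (blockJ ?b))"
    unfolding conj_tuple_def Jm_eq ..
  interpret horizontal_lift ?b V \<Lambda>
  proof
    show "block_offdiag ?b (\<Lambda> t)" for t
      using block_offdiag_block_of[OF assms(2-5)] assms(10) by blast
  qed (use assms in auto)
  show ?thesis
    unfolding flag_eq curve_eq by (rule geodesic_iff_eq_mexp)
qed

end
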